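(* Let $\mathbf L=(L,\le,\wedge,\vee,0,1,\nu)$ be a bounded lattice with a minimal quasi-complementation operator and let $(X,\parallel,Y,S_\vee)$ be its canonical frame. Then $(X_a)^*=X_{\nu a}$ for every $a\in L$, and the map $a\mapsto X_a$ is an isomorphism of quasi-complemented lattices from $\mathbf L$ onto $(\mathtt{KO}\mathcal G(\mathfrak X),\subseteq,\cap,\vee,\emptyset,X,(\cdot)^* )$.
   Context: A minimal quasi-complementation operator on a bounded lattice is an antitone operation $\nu$ with $\nu 0=1$ and $\nu(a\vee b)=\nu a\wedge\nu b$. Canonical frame: $X$ the proper filters of $\mathbf L$, $Y$ the proper ideals, $x\parallel y$ iff $x\cap y\neq\emptyset$; $\widehat\nu(x)$ is the ideal generated by $\{\nu a:a\in x\}$; $yS_\vee x$ iff $\widehat\nu(x)\subseteq y$ (equivalently, $a\in x$ implies $\nu a\in y$ for all $a$). $X_a=\{x\in X:a\in x\}$; $\mathfrak X$ is $X$ with the topology generated by $\{X_a\}$. For $U\subseteq X$, $U'=\{y:\forall x\in U\;x\parallel y\}$; for $V\subseteq Y$, $V'=\{x:\forall y\in V\;x\parallel y\}$; $\mathtt{KO}\mathcal G(\mathfrak X)$ is the set of compact-open subsets $A$ of $\mathfrak X$ with $A=A''$, with join $A\vee C=(A\cup C)''$. Incompatibility: $x\perp z$ iff $\forall y(yS_\vee z\Rightarrow x\parallel y)$ (equivalently, some $e\in z$ has $\nu e\in x$); $A^*=\{x:\forall z\in A\;x\perp z\}$. *)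

theory Defs
  imports "HOL-Analysis.Analysis"
begin

definition mqc :: "('a::bounded_lattice \<Rightarrow> 'a) \<Rightarrow> bool" where
  "mqc \<nu> \<longleftrightarrow> antimono \<nu> \<and> \<nu> bot = top \<and> (\<forall>a b. \<nu> (sup a b) = inf (\<nu> a) (\<nu> b))"

definition lattice_filter :: "'a::bounded_lattice set \<Rightarrow> bool" where
  "lattice_filter F \<longleftrightarrow> F \<noteq> {} \<and> (\<forall>a b. a \<in> F \<longrightarrow> a \<le> b \<longrightarrow> b \<in> F)
     \<and> (\<forall>a\<in>F. \<forall>b\<in>F. inf a b \<in> F)"

definition lattice_ideal :: "'a::bounded_lattice set \<Rightarrow> bool" where
  "lattice_ideal I \<longleftrightarrow> I \<noteq> {} \<and> (\<forall>a b. a \<in> I \<longrightarrow> b \<le> a \<longrightarrow> b \<in> I)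
     \<and> (\<forall>a\<in>I. \<forall>b\<in>I. sup a b \<in> I)"

definition proper_filter :: "'a::bounded_lattice set \<Rightarrow> bool" where
  "proper_filter F \<longleftrightarrow> lattice_filter F \<and> F \<noteq> UNIV"

definition proper_ideal :: "'a::bounded_lattice set \<Rightarrow> bool" where
  "proper_ideal I \<longleftrightarrow> lattice_ideal I \<and> I \<noteq> UNIV"

text \<open>Canonical frame: X = proper filters, Y = proper ideals.\<close>
definition FX :: "'a::bounded_lattice set set" where
  "FX = {x. proper_filter x}"

definition FY :: "'a::bounded_lattice set set" where
  "FY = {y. proper_ideal y}"

definition par :: "'a set \<Rightarrow> 'a set \<Rightarrow> bool" where
  "par x y \<longleftrightarrow> x \<inter> y \<noteq> {}"

definition ideal_gen :: "'a::bounded_lattice set \<Rightarrow> 'a set" where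
  "ideal_gen S = \<Inter>{I. lattice_ideal I \<and> S \<subseteq> I}"

definition nu_hat :: "('a::bounded_lattice \<Rightarrow> 'a) \<Rightarrow> 'a set \<Rightarrow> 'a set" where
  "nu_hat \<nu> x = ideal_gen (\<nu> ` x)"

definition SV :: "('a::bounded_lattice \<Rightarrow> 'a) \<Rightarrow> 'a set \<Rightarrow> 'a set \<Rightarrow> bool" where
  "SV \<nu> y x \<longleftrightarrow> nu_hat \<nu> x \<subseteq> y"

definition Xa :: "'a::bounded_lattice \<Rightarrow> 'a set set" where
  "Xa a = {x \<in> FX. a \<in> x}"

definition primeU :: "'a::bounded_lattice set set \<Rightarrow> 'a set set" where
  "primeU U = {y \<in> FY. \<forall>x\<in>U. par x y}"

definition primeV :: "'a::bounded_lattice set set \<Rightarrow> 'a set set" where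
  "primeV V = {x \<in> FX. \<forall>y\<in>V. par x y}"

definition frame_top :: "'a::bounded_lattice set topology" where
  "frame_top = topology_generated_by (range Xa)"

definition KOG :: "'a::bounded_lattice set set set" where
  "KOG = {A. compactin frame_top A \<and> openin frame_top A \<and> A = primeV (primeU A)}"

definition gjoin :: "'a::bounded_lattice set set \<Rightarrow> 'a set set \<Rightarrow> 'a set set" where
  "gjoin A C = primeV (primeU (A \<union> C))"

definition perp :: "('a::bounded_lattice \<Rightarrow> 'a) \<Rightarrow> 'a set \<Rightarrow> 'a set \<Rightarrow> bool" where
  "perp \<nu> x z \<longleftrightarrow> (\<forall>y\<in>FY. SV \<nu> y z \<longrightarrow> par x y)"

definition star :: "('a::bounded_lattice \<Rightarrow> 'a) \<Rightarrow> 'a set set \<Rightarrow> 'a set set" where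
  "star \<nu> A = {x \<in> FX. \<forall>z\<in>A. perp \<nu> x z}"

end

theory Submission
  imports Defs
begin

text \<open>The sets \<open>X\<^sub>a\<close> form a basis closed under finite intersections, so every open set is a
  union of basic sets and every compact open set a finite union \<open>X\<^sub>b\<^sub>1 \<union> \<dots> \<union> X\<^sub>b\<^sub>n\<close>. Its
  Galois closure is \<open>X\<^sub>c\<close> with \<open>c = b\<^sub>1 \<squnion> \<dots> \<squnion> b\<^sub>n\<close>, because both are cut out by the ideals
  containing \<open>c\<close>; principal filters and ideals separate elements. For the operator, the ideal
  generated by \<open>\<nu>\<close> applied to a filter \<open>z\<close> is \<open>{d. \<exists>e\<in>z. d \<le> \<nu> e}\<close>, which gives
  \<open>x \<perp> z \<longleftrightarrow> (\<exists>e\<in>z. \<nu> e \<in> x)\<close>; testing this on the principal filter of \<open>a\<close> yields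
  \<open>(X\<^sub>a)\<^sup>* = X\<^sub>\<nu>\<^sub>a\<close>.\<close>

lemma lattice_filter_top: "lattice_filter F \<Longrightarrow> top \<in> F"
  unfolding lattice_filter_def by auto

lemma FX_top: "x \<in> FX \<Longrightarrow> top \<in> x"
  unfolding FX_def proper_filter_def by (simp add: lattice_filter_top)

lemma FX_up_closed: "x \<in> FX \<Longrightarrow> a \<in> x \<Longrightarrow> a \<le> b \<Longrightarrow> b \<in> x"
  unfolding FX_def proper_filter_def lattice_filter_def by auto

lemma FX_bot:
  assumes "x \<in> FX" shows "bot \<notin> x"
proof
  assume "bot \<in> x"
  then have "b \<in> x" for b using FX_up_closed[OF assms] bot_least by blast
  then show False using assms unfolding FX_def proper_filter_def by auto
qed

lemma FX_inf_closed: "x \<in> FX \<Longrightarrow> a \<in> x \<Longrightarrow> b \<in> x \<Longrightarrow> inf a b \<in> x"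
  unfolding FX_def proper_filter_def lattice_filter_def by auto

lemma FX_inf_iff: "x \<in> FX \<Longrightarrow> inf a b \<in> x \<longleftrightarrow> a \<in> x \<and> b \<in> x"
  by (meson FX_up_closed FX_inf_closed inf_le1 inf_le2)

lemma FY_bot: "y \<in> FY \<Longrightarrow> bot \<in> y"
  unfolding FY_def proper_ideal_def lattice_ideal_def by auto

lemma FY_down_closed: "y \<in> FY \<Longrightarrow> a \<in> y \<Longrightarrow> b \<le> a \<Longrightarrow> b \<in> y"
  unfolding FY_def proper_ideal_def lattice_ideal_def by auto

lemma FY_sup_closed: "y \<in> FY \<Longrightarrow> a \<in> y \<Longrightarrow> b \<in> y \<Longrightarrow> sup a b \<in> y"
  unfolding FY_def proper_ideal_def lattice_ideal_def by auto

lemma FY_sup_iff: "y \<in> FY \<Longrightarrow> sup a b \<in> y \<longleftrightarrow> a \<in> y \<and> b \<in> y"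
  by (meson FY_down_closed FY_sup_closed sup_ge1 sup_ge2)

lemma principal_filter_in_FX: "(a::'a::bounded_lattice) \<noteq> bot \<Longrightarrow> {b. a \<le> b} \<in> FX"
  unfolding FX_def proper_filter_def lattice_filter_def
  by (auto intro: order_trans) (metis UNIV_I bot_unique mem_Collect_eq)

lemma principal_ideal_in_FY: "(a::'a::bounded_lattice) \<noteq> top \<Longrightarrow> {b. b \<le> a} \<in> FY"
  unfolding FY_def proper_ideal_def lattice_ideal_def
  by (auto intro: order_trans) (metis UNIV_I top_unique mem_Collect_eq)

lemma principal_filter_in_Xa: "a \<noteq> bot \<Longrightarrow> {b. a \<le> b} \<in> Xa a"
  unfolding Xa_def by (simp add: principal_filter_in_FX)

lemma Xa_le_iff: "Xa a \<subseteq> Xa b \<longleftrightarrow> (a::'a::bounded_lattice) \<le> b"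
proof
  assume sub: "Xa a \<subseteq> Xa b"
  show "a \<le> b"
  proof (cases "a = bot")
    case False
    then show ?thesis using sub principal_filter_in_Xa unfolding Xa_def by blast
  qed simp
qed (auto simp: Xa_def intro: FX_up_closed)

lemma inj_Xa: "inj Xa"
  by (rule injI) (metis Xa_le_iff order_antisym order_refl)

lemma Xa_inf: "Xa (inf a b) = Xa a \<inter> Xa b"
  unfolding Xa_def by (auto simp: FX_inf_iff)

lemma Xa_bot: "Xa bot = {}"
  unfolding Xa_def by (auto dest: FX_bot)

lemma Xa_top: "Xa top = FX"
  unfolding Xa_def by (auto intro: FX_top)

lemma primeU_Union_Xa: "primeU (\<Union>(Xa ` B)) = {y \<in> FY. B \<subseteq> y}"
proof (intro equalityI subsetI)
  fix y assume y: "y \<in> primeU (\<Union>(Xa ` B))"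
  then have yFY: "y \<in> FY" unfolding primeU_def by simp
  have "b \<in> y" if "b \<in> B" for b
  proof (cases "b = bot")
    case False
    then have "par {c. b \<le> c} y"
      using y \<open>b \<in> B\<close> principal_filter_in_Xa unfolding primeU_def by blast
    then show ?thesis using yFY FY_down_closed unfolding par_def by blast
  qed (simp add: yFY FY_bot)
  with yFY show "y \<in> {y \<in> FY. B \<subseteq> y}" by blast
qed (auto simp: primeU_def Xa_def par_def)

lemma primeV_ideals_containing: "primeV {y \<in> FY. c \<in> y} = Xa c"
proof (intro equalityI subsetI)
  fix x assume x: "x \<in> primeV {y \<in> FY. c \<in> y}"
  then have xFX: "x \<in> FX" unfolding primeV_def by simp
  show "x \<in> Xa c"
  proof (cases "c = top")
    case False
    then have "par x {d. d \<le> c}"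
      using x principal_ideal_in_FY unfolding primeV_def by blast
    then show ?thesis using xFX FX_up_closed unfolding par_def Xa_def by blast
  qed (simp add: Xa_top xFX)
qed (auto simp: primeV_def Xa_def par_def)

lemma ideals_containing_finite:
  assumes "finite B"
  obtains c :: "'a::bounded_lattice" where "\<And>y. y \<in> FY \<Longrightarrow> B \<subseteq> y \<longleftrightarrow> c \<in> y"
  using assms
proof (induction B arbitrary: thesis rule: finite_induct)
  case empty
  then show ?case using FY_bot by blast
next
  case (insert b B)
  then obtain c where "\<And>y. y \<in> FY \<Longrightarrow> B \<subseteq> y \<longleftrightarrow> c \<in> y" by blast
  then show ?case using insert.prems[of "sup b c"] by (simp add: FY_sup_iff)
qed

lemma closure_Union_Xa_finite:
  assumes "finite B"
  obtains c :: "'a::bounded_lattice" where "primeV (primeU (\<Union>(Xa ` B))) = Xa c"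
proof -
  obtain c :: 'a where "\<And>y. y \<in> FY \<Longrightarrow> B \<subseteq> y \<longleftrightarrow> c \<in> y"
    using ideals_containing_finite[OF assms] by blast
  then have "primeU (\<Union>(Xa ` B)) = {y \<in> FY. c \<in> y}" by (auto simp: primeU_Union_Xa)
  then show ?thesis using that primeV_ideals_containing by metis
qed

lemma closure_Xa: "primeV (primeU (Xa c)) = Xa c"
  using primeU_Union_Xa[of "{c}"] primeV_ideals_containing[of c] by simp

lemma Xa_sup: "Xa (sup a b) = gjoin (Xa a) (Xa b)"
proof -
  have "primeU (Xa a \<union> Xa b) = {y \<in> FY. {a, b} \<subseteq> y}"
    using primeU_Union_Xa[of "{a, b}"] by simp
  also have "\<dots> = {y \<in> FY. sup a b \<in> y}" using FY_sup_iff by blast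
  finally show ?thesis unfolding gjoin_def by (simp add: primeV_ideals_containing)
qed

lemma generate_topology_on_Xa_imp_Union:
  "generate_topology_on (range Xa) U \<Longrightarrow> \<exists>B. U = \<Union>(Xa ` B)"
proof (induction rule: generate_topology_on.induct)
  case Empty
  show ?case by (rule exI[of _ "{}"]) simp
next
  case (Int U V)
  then obtain B C where U: "U = \<Union>(Xa ` B)" and V: "V = \<Union>(Xa ` C)" by blast
  have "U \<inter> V = (\<Union>b\<in>B. \<Union>c\<in>C. Xa (inf b c))"
    unfolding U V by (auto simp: Xa_inf)
  also have "\<dots> = \<Union>(Xa ` (\<Union>b\<in>B. \<Union>c\<in>C. {inf b c}))" by blast
  finally show ?case by blast
next
  case (UN K)
  then obtain f where "\<forall>k\<in>K. k = \<Union>(Xa ` f k)" by metis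
  then have "\<Union>K = \<Union>(Xa ` \<Union>(f ` K))" by auto
  then show ?case by blast
next
  case (Basis s)
  then obtain c where "s = Xa c" by blast
  then show ?case by (intro exI[of _ "{c}"]) simp
qed

lemma openin_frame_top_imp_Union_Xa: "openin frame_top U \<Longrightarrow> \<exists>B. U = \<Union>(Xa ` B)"
  unfolding frame_top_def
  using openin_topology_generated_by generate_topology_on_Xa_imp_Union by blast

lemma openin_Xa: "openin frame_top (Xa a)"
  unfolding frame_top_def by (rule topology_generated_by_Basis) simp

lemma topspace_frame_top: "topspace frame_top = FX"
proof -
  have "\<Union>(range Xa) = FX" using Xa_top unfolding Xa_def by auto
  then show ?thesis unfolding frame_top_def by simp
qed

text \<open>An open cover of \<open>X\<^sub>a\<close> has a single member containing the principal filter of \<open>a\<close>, and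
  that member already contains \<open>X\<^sub>a\<close>.\<close>
lemma compactin_Xa: "compactin frame_top (Xa a)"
  unfolding compactin_def
proof (intro conjI allI impI)
  show "Xa a \<subseteq> topspace frame_top" by (auto simp: topspace_frame_top Xa_def)
next
  fix \<U> assume "Ball \<U> (openin frame_top) \<and> Xa a \<subseteq> \<Union>\<U>"
  then have opens: "\<And>U. U \<in> \<U> \<Longrightarrow> openin frame_top U" and cover: "Xa a \<subseteq> \<Union>\<U>" by auto
  show "\<exists>\<F>. finite \<F> \<and> \<F> \<subseteq> \<U> \<and> Xa a \<subseteq> \<Union>\<F>"
  proof (cases "a = bot")
    case True
    then show ?thesis by (intro exI[of _ "{}"]) (simp add: Xa_bot)
  next
    case False
    then obtain U where U: "U \<in> \<U>" "{c. a \<le> c} \<in> U"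
      using cover principal_filter_in_Xa by blast
    then obtain B where B: "U = \<Union>(Xa ` B)" using opens openin_frame_top_imp_Union_Xa by blast
    then obtain b where "b \<in> B" "a \<le> b" using U unfolding Xa_def by auto
    then have "Xa a \<subseteq> U" using B Xa_le_iff by blast
    then show ?thesis using U by (intro exI[of _ "{U}"]) auto
  qed
qed

lemma KOG_imp_Xa:
  assumes "A \<in> KOG"
  obtains c where "A = Xa c"
proof -
  have compact: "compactin frame_top A" and closed: "A = primeV (primeU A)"
    and "openin frame_top A" using assms unfolding KOG_def by auto
  then obtain B where B: "A = \<Union>(Xa ` B)" using openin_frame_top_imp_Union_Xa by blast
  moreover have "\<forall>U\<in>Xa ` B. openin frame_top U" using openin_Xa by blast
  ultimately obtain \<F> where "finite \<F>" "\<F> \<subseteq> Xa ` B" "A \<subseteq> \<Union>\<F>"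
    using compact unfolding compactin_def by (metis order_refl)
  then obtain B' where "finite B'" "B' \<subseteq> B" "A \<subseteq> \<Union>(Xa ` B')"
    by (metis finite_subset_image)
  then have "A = \<Union>(Xa ` B')" using B by blast
  then show ?thesis using that closed closure_Union_Xa_finite \<open>finite B'\<close> by metis
qed

lemma KOG_eq_range_Xa: "KOG = range Xa"
  using KOG_imp_Xa by (fastforce simp: KOG_def compactin_Xa openin_Xa closure_Xa)

lemma lattice_ideal_below_image:
  assumes "antimono \<nu>" and "lattice_filter z"
  shows "lattice_ideal {d. \<exists>e\<in>z. d \<le> \<nu> e}" (is "lattice_ideal ?D")
proof -
  have "\<nu> top \<in> ?D" using assms(2) lattice_filter_top by blast
  moreover have "b \<in> ?D" if "a \<in> ?D" "b \<le> a" for a b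
    using that order_trans by blast
  moreover have "sup a b \<in> ?D" if mem: "a \<in> ?D" "b \<in> ?D" for a b
  proof -
    from mem obtain e1 e2 where e: "e1 \<in> z" "e2 \<in> z" and ab: "a \<le> \<nu> e1" "b \<le> \<nu> e2"
      by blast
    have "\<nu> e1 \<le> \<nu> (inf e1 e2)" "\<nu> e2 \<le> \<nu> (inf e1 e2)"
      using assms(1) by (simp_all add: antimono_def)
    with ab have "sup a b \<le> \<nu> (inf e1 e2)" by (meson le_supI order_trans)
    moreover have "inf e1 e2 \<in> z" using assms(2) e unfolding lattice_filter_def by blast
    ultimately show ?thesis by blast
  qed
  ultimately show ?thesis unfolding lattice_ideal_def by blast
qed

lemma nu_hat_eq:
  assumes "antimono \<nu>" and "lattice_filter z"
  shows "nu_hat \<nu> z = {d. \<exists>e\<in>z. d \<le> \<nu> e}"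
proof
  show "nu_hat \<nu> z \<subseteq> {d. \<exists>e\<in>z. d \<le> \<nu> e}"
    unfolding nu_hat_def ideal_gen_def
    using lattice_ideal_below_image[OF assms] by (intro Inter_lower) auto
  have "d \<in> I" if "lattice_ideal I" "\<nu> ` z \<subseteq> I" "e \<in> z" "d \<le> \<nu> e" for d e I
    using that unfolding lattice_ideal_def by blast
  then show "{d. \<exists>e\<in>z. d \<le> \<nu> e} \<subseteq> nu_hat \<nu> z"
    unfolding nu_hat_def ideal_gen_def by blast
qed

lemma perp_iff:
  assumes "antimono \<nu>" and x: "x \<in> FX" and z: "z \<in> FX"
  shows "perp \<nu> x z \<longleftrightarrow> (\<exists>e\<in>z. \<nu> e \<in> x)"
proof
  have hat: "nu_hat \<nu> z = {d. \<exists>e\<in>z. d \<le> \<nu> e}"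
    using nu_hat_eq assms unfolding FX_def proper_filter_def by blast
  assume perp: "perp \<nu> x z"
  show "\<exists>e\<in>z. \<nu> e \<in> x"
  proof (cases "nu_hat \<nu> z = UNIV")
    case True
    then obtain e where "e \<in> z" "\<nu> e = top" using hat top_unique by blast
    then show ?thesis using FX_top x by metis
  next
    case False
    moreover have "lattice_ideal (nu_hat \<nu> z)"
      using hat lattice_ideal_below_image[OF assms(1)] z unfolding FX_def proper_filter_def by simp
    ultimately have "nu_hat \<nu> z \<in> FY" unfolding FY_def proper_ideal_def by simp
    then have "par x (nu_hat \<nu> z)" using perp unfolding perp_def SV_def by blast
    then show ?thesis using hat x FX_up_closed unfolding par_def by blast
  qed
next
  assume "\<exists>e\<in>z. \<nu> e \<in> x"
  then show "perp \<nu> x z"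
    unfolding perp_def SV_def par_def nu_hat_def ideal_gen_def by blast
qed

lemma star_Xa:
  assumes "mqc \<nu>"
  shows "star \<nu> (Xa a) = Xa (\<nu> a)"
proof (cases "a = bot")
  case True
  then show ?thesis using assms by (simp add: mqc_def star_def Xa_bot Xa_top)
next
  case False
  have anti: "antimono \<nu>" using assms by (simp add: mqc_def)
  show ?thesis
  proof (intro equalityI subsetI)
    fix x assume x: "x \<in> star \<nu> (Xa a)"
    then have xFX: "x \<in> FX" unfolding star_def by simp
    have "perp \<nu> x {c. a \<le> c}" using x principal_filter_in_Xa[OF False] unfolding star_def by blast
    then obtain e where "a \<le> e" "\<nu> e \<in> x"
      using perp_iff[OF anti xFX principal_filter_in_FX[OF False]] by blast
    moreover have "\<nu> e \<le> \<nu> a" using anti \<open>a \<le> e\<close> by (simp add: antimono_def)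
    ultimately show "x \<in> Xa (\<nu> a)" using xFX FX_up_closed unfolding Xa_def by blast
  next
    fix x assume "x \<in> Xa (\<nu> a)"
    then show "x \<in> star \<nu> (Xa a)"
      using perp_iff[OF anti] unfolding star_def Xa_def by blast
  qed
qed

theorem lemma5p2:
  fixes \<nu> :: "'a::bounded_lattice \<Rightarrow> 'a"
  assumes "mqc \<nu>"
  shows "(\<forall>a. star \<nu> (Xa a) = Xa (\<nu> a))
    \<and> bij_betw (Xa::'a \<Rightarrow> 'a set set) UNIV KOG
    \<and> (\<forall>a b::'a. a \<le> b \<longleftrightarrow> Xa a \<subseteq> Xa b)
    \<and> (\<forall>a b::'a. Xa (inf a b) = Xa a \<inter> Xa b)
    \<and> (\<forall>a b::'a. Xa (sup a b) = gjoin (Xa a) (Xa b))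
    \<and> Xa (bot::'a) = {}
    \<and> Xa (top::'a) = FX
    \<and> (\<forall>a. Xa (\<nu> a) = star \<nu> (Xa a))"
  by (simp add: bij_betw_def star_Xa[OF assms] inj_Xa KOG_eq_range_Xa Xa_le_iff Xa_inf Xa_sup
      Xa_bot Xa_top)

end
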